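(* Let $G=(V,E)$ be a graph with colouring $f:V\to\{B,R\}$. If $E'$ is an optimal solution to the MIE problem on $(G,f)$, or an optimal solution to the MIAE problem on $(G,f)$, then no edge of $E'\setminus E$ has both endpoints red.
   Context: Graphs are finite, simple and undirected. A colouring $f:V\to\{B,R\}$ partitions $V$ into the blue nodes $B=f^{-1}(B)$ and red nodes $R=f^{-1}(R)$. For an edge set $E'$ on $V$ and $v\in V$, let $b_{E'}(v)$ and $r_{E'}(v)$ be the numbers of blue and red neighbours of $v$ in $(V,E')$. A node $v$ is under (majority) illusion in $(V,E')$ if $r_{E'}(v)>b_{E'}(v)$. Standing assumption: $|B|>|R|$. An optimal solution to MIAE is an edge set $E'\supseteq E$ on $V$ such that no node is under illusion in $(V,E')$ and $|E'\setminus E|$ is minimum among all such sets. An optimal solution to MIRE is an edge set $E'\subseteq E$ such that no node is under illusion in $(V,E')$ and $|E\setminus E'|$ is minimum among all such sets. An optimal solution to MIE is an edge set $E'$ on $V$ such that no node is under illusion in $(V,E')$ and $|E\setminus E'|+|E'\setminus E|$ is minimum among all such sets. *)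

theory Defs
  imports Main
begin

datatype colour = B | R

definition edge_set_on :: "'a set \<Rightarrow> 'a set set \<Rightarrow> bool" where
  "edge_set_on V E \<longleftrightarrow> (\<forall>e\<in>E. \<exists>u v. u \<in> V \<and> v \<in> V \<and> u \<noteq> v \<and> e = {u, v})"

definition blue_nbrs :: "'a set \<Rightarrow> 'a set set \<Rightarrow> ('a \<Rightarrow> colour) \<Rightarrow> 'a \<Rightarrow> nat" where
  "blue_nbrs V E f v = card {u \<in> V. u \<noteq> v \<and> {u, v} \<in> E \<and> f u = B}"

definition red_nbrs :: "'a set \<Rightarrow> 'a set set \<Rightarrow> ('a \<Rightarrow> colour) \<Rightarrow> 'a \<Rightarrow> nat" where
  "red_nbrs V E f v = card {u \<in> V. u \<noteq> v \<and> {u, v} \<in> E \<and> f u = R}"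

definition under_illusion :: "'a set \<Rightarrow> 'a set set \<Rightarrow> ('a \<Rightarrow> colour) \<Rightarrow> 'a \<Rightarrow> bool" where
  "under_illusion V E f v \<longleftrightarrow> red_nbrs V E f v > blue_nbrs V E f v"

definition no_illusion :: "'a set \<Rightarrow> 'a set set \<Rightarrow> ('a \<Rightarrow> colour) \<Rightarrow> bool" where
  "no_illusion V E f \<longleftrightarrow> (\<forall>v\<in>V. \<not> under_illusion V E f v)"

definition opt_MIAE :: "'a set \<Rightarrow> 'a set set \<Rightarrow> ('a \<Rightarrow> colour) \<Rightarrow> 'a set set \<Rightarrow> bool" where
  "opt_MIAE V E f E' \<longleftrightarrow> edge_set_on V E' \<and> E \<subseteq> E' \<and> no_illusion V E' f \<and>
     (\<forall>E''. edge_set_on V E'' \<and> E \<subseteq> E'' \<and> no_illusion V E'' f \<longrightarrow> card (E' - E) \<le> card (E'' - E))"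

definition opt_MIRE :: "'a set \<Rightarrow> 'a set set \<Rightarrow> ('a \<Rightarrow> colour) \<Rightarrow> 'a set set \<Rightarrow> bool" where
  "opt_MIRE V E f E' \<longleftrightarrow> E' \<subseteq> E \<and> no_illusion V E' f \<and>
     (\<forall>E''. E'' \<subseteq> E \<and> no_illusion V E'' f \<longrightarrow> card (E - E') \<le> card (E - E''))"

definition opt_MIE :: "'a set \<Rightarrow> 'a set set \<Rightarrow> ('a \<Rightarrow> colour) \<Rightarrow> 'a set set \<Rightarrow> bool" where
  "opt_MIE V E f E' \<longleftrightarrow> edge_set_on V E' \<and> no_illusion V E' f \<and>
     (\<forall>E''. edge_set_on V E'' \<and> no_illusion V E'' f \<longrightarrow>
        card (E - E') + card (E' - E) \<le> card (E - E'') + card (E'' - E))"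

end

theory Submission
  imports Defs
begin

text \<open>Deleting an added edge between two red nodes keeps every blue count and can only lower
  red counts, so no illusion is created; yet it strictly shrinks the set of added edges while
  leaving the set of removed edges unchanged, contradicting optimality for MIAE and for MIE.\<close>

lemma blue_nbrs_Diff_red_edge:
  assumes "f u = R" and "f v = R"
  shows "blue_nbrs V (E - {{u, v}}) f w = blue_nbrs V E f w"
proof -
  have "{x, w} \<noteq> {u, v}" if "f x = B" for x
    using that assms by (auto simp: doubleton_eq_iff)
  then have "{x \<in> V. x \<noteq> w \<and> {x, w} \<in> E - {{u, v}} \<and> f x = B}
           = {x \<in> V. x \<noteq> w \<and> {x, w} \<in> E \<and> f x = B}"
    by blast
  then show ?thesis
    unfolding blue_nbrs_def by simp
qed

lemma red_nbrs_mono: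
  assumes "finite V" and "E1 \<subseteq> E2"
  shows "red_nbrs V E1 f w \<le> red_nbrs V E2 f w"
  unfolding red_nbrs_def using assms by (intro card_mono) auto

lemma no_illusion_Diff_red_edge:
  assumes "finite V" and "no_illusion V E f" and "f u = R" and "f v = R"
  shows "no_illusion V (E - {{u, v}}) f"
  unfolding no_illusion_def under_illusion_def
proof (intro ballI notI)
  fix w
  assume "w \<in> V"
    and "blue_nbrs V (E - {{u, v}}) f w < red_nbrs V (E - {{u, v}}) f w"
  moreover have "\<not> blue_nbrs V E f w < red_nbrs V E f w"
    using assms(2) \<open>w \<in> V\<close> unfolding no_illusion_def under_illusion_def by blast
  moreover have "red_nbrs V (E - {{u, v}}) f w \<le> red_nbrs V E f w"
    using assms(1) by (rule red_nbrs_mono) blast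
  moreover have "blue_nbrs V (E - {{u, v}}) f w = blue_nbrs V E f w"
    using assms(3,4) by (rule blue_nbrs_Diff_red_edge)
  ultimately show False
    by linarith
qed

lemma edge_set_on_Diff: "edge_set_on V E \<Longrightarrow> edge_set_on V (E - X)"
  unfolding edge_set_on_def by blast

lemma finite_edge_set_on:
  assumes "finite V" and "edge_set_on V E"
  shows "finite E"
proof (rule finite_subset)
  show "E \<subseteq> Pow V"
    using assms(2) unfolding edge_set_on_def by auto
  show "finite (Pow V)"
    using assms(1) by simp
qed

lemma card_added_Diff_added_edge:
  assumes "finite E'" and "e \<in> E' - E"
  shows "card ((E' - {e}) - E) < card (E' - E)"
proof -
  have "(E' - {e}) - E = (E' - E) - {e}" by blast
  then show ?thesis
    using assms by (metis card_Diff1_less finite_Diff)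
qed

theorem mainTheorem1:
  fixes V :: "'a set" and E E' :: "'a set set" and f :: "'a \<Rightarrow> colour"
  assumes "finite V"
    and "edge_set_on V E"
    and "card {v \<in> V. f v = B} > card {v \<in> V. f v = R}"
    and "opt_MIE V E f E' \<or> opt_MIAE V E f E'"
  shows "\<forall>u v. {u, v} \<in> E' - E \<longrightarrow> \<not> (f u = R \<and> f v = R)"
proof (intro allI impI notI)
  fix u v
  assume added: "{u, v} \<in> E' - E" and red: "f u = R \<and> f v = R"
  define E'' where "E'' = E' - {{u, v}}"
  have edges: "edge_set_on V E'" and no_ill: "no_illusion V E' f"
    using assms(4) unfolding opt_MIE_def opt_MIAE_def by (elim disjE conjE; simp)+
  have feasible: "edge_set_on V E''" "no_illusion V E'' f"
    unfolding E''_def using edges no_ill red assms(1)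
    by (auto intro: edge_set_on_Diff no_illusion_Diff_red_edge)
  have fewer_added: "card (E'' - E) < card (E' - E)"
    unfolding E''_def using finite_edge_set_on[OF assms(1) edges] added
    by (rule card_added_Diff_added_edge)
  have same_removed: "E - E'' = E - E'"
    unfolding E''_def using added by blast
  from assms(4) show False
  proof
    assume "opt_MIE V E f E'"
    then have "card (E - E') + card (E' - E) \<le> card (E - E'') + card (E'' - E)"
      using feasible unfolding opt_MIE_def by blast
    then show False
      using fewer_added same_removed by simp
  next
    assume opt: "opt_MIAE V E f E'"
    then have "E \<subseteq> E''"
      using added unfolding opt_MIAE_def E''_def by blast
    with opt have "card (E' - E) \<le> card (E'' - E)"
      using feasible unfolding opt_MIAE_def by blast
    then show False
      using fewer_added by linarith
  qed
qed

end
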